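(* Let $\alpha,\sigma>0$. For every $t\ge0$, the Koopman operator $K^t$ of the Ornstein–Uhlenbeck process maps $\mathbb H_\sigma$ into itself, and $$ \|K^t\|_{\mathbb H_\sigma\to\mathbb H_\sigma}\le e^{\frac{\alpha}{2}t}. $$
   Context: The Ornstein–Uhlenbeck process on $\mathbb R$ is the solution of $dX_t=-\alpha X_t\,dt+dW_t$ with $\alpha>0$. Its invariant measure is $d\mu(x)=\sqrt{\alpha/\pi}\,e^{-\alpha x^2}dx$ and its transition kernel is $\rho_t(x,dy)=\sqrt{c_t/\pi}\exp[-c_t(y-e^{-\alpha t}x)^2]\,dy$ with $c_t=\alpha/(1-e^{-2\alpha t})$ for $t>0$. The Koopman operator is $(K^t\psi)(x)=\int\psi(y)\rho_t(x,dy)$ (with $K^0=I$), acting on $L^2_\mu(\mathbb R)$. $\mathbb H_\sigma$ denotes the RKHS of the Gaussian kernel $k^\sigma(x,y)=\exp(-(x-y)^2/\sigma^2)$ on $\mathbb R$, which is continuously embedded in $L^2_\mu(\mathbb R)$. *)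

theory Defs
  imports "HOL-Analysis.Analysis"
begin

definition gauss_kernel :: "real \<Rightarrow> real \<Rightarrow> real \<Rightarrow> real" where
  "gauss_kernel \<sigma> x y = exp (- ((x - y)^2) / \<sigma>^2)"

text \<open>A finite kernel combination \<open>\<Sum>i a_i k(p_i,\<cdot>)\<close> is represented by a list of
  pairs (point, coefficient).\<close>

definition kcomb_eval :: "real \<Rightarrow> (real \<times> real) list \<Rightarrow> real \<Rightarrow> real" where
  "kcomb_eval \<sigma> c x = (\<Sum>(p,a)\<leftarrow>c. a * gauss_kernel \<sigma> p x)"

definition kcomb_sqnorm :: "real \<Rightarrow> (real \<times> real) list \<Rightarrow> real" where
  "kcomb_sqnorm \<sigma> c = (\<Sum>(p,a)\<leftarrow>c. \<Sum>(q,b)\<leftarrow>c. a * b * gauss_kernel \<sigma> p q)"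

definition kcomb_diff :: "(real \<times> real) list \<Rightarrow> (real \<times> real) list \<Rightarrow> (real \<times> real) list" where
  "kcomb_diff c d = c @ map (\<lambda>(q,b). (q, - b)) d"

definition rkhs_approx :: "real \<Rightarrow> (real \<Rightarrow> real) \<Rightarrow> (nat \<Rightarrow> (real \<times> real) list) \<Rightarrow> bool" where
  "rkhs_approx \<sigma> f g \<longleftrightarrow>
     (\<forall>\<epsilon>>0. \<exists>N. \<forall>m\<ge>N. \<forall>n\<ge>N. sqrt (kcomb_sqnorm \<sigma> (kcomb_diff (g m) (g n))) < \<epsilon>) \<and>
     (\<forall>x. (\<lambda>n. kcomb_eval \<sigma> (g n) x) \<longlonglongrightarrow> f x)"

definition gauss_rkhs :: "real \<Rightarrow> (real \<Rightarrow> real) set" where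
  "gauss_rkhs \<sigma> = {f. \<exists>g. rkhs_approx \<sigma> f g}"

definition gauss_rkhs_norm :: "real \<Rightarrow> (real \<Rightarrow> real) \<Rightarrow> real" where
  "gauss_rkhs_norm \<sigma> f =
     Inf {L. \<exists>g. rkhs_approx \<sigma> f g \<and> (\<lambda>n. sqrt (kcomb_sqnorm \<sigma> (g n))) \<longlonglongrightarrow> L}"

definition ou_c :: "real \<Rightarrow> real \<Rightarrow> real" where
  "ou_c \<alpha> t = \<alpha> / (1 - exp (- 2 * \<alpha> * t))"

definition ou_density :: "real \<Rightarrow> real \<Rightarrow> real \<Rightarrow> real \<Rightarrow> real" where
  "ou_density \<alpha> t x y = sqrt (ou_c \<alpha> t / pi) * exp (- ou_c \<alpha> t * (y - exp (- \<alpha> * t) * x)^2)"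

definition koopman :: "real \<Rightarrow> real \<Rightarrow> (real \<Rightarrow> real) \<Rightarrow> (real \<Rightarrow> real)" where
  "koopman \<alpha> t \<psi> = (if t = 0 then \<psi> else (\<lambda>x. integral\<^sup>L lborel (\<lambda>y. \<psi> y * ou_density \<alpha> t x y)))"

end

theory Submission
  imports Defs "HOL-Probability.Distributions"
begin

text \<open>
  Write \<open>a = exp (- \<alpha> * t)\<close> and \<open>s = \<sigma>^2 + 1 / ou_c \<alpha> t\<close>. The Koopman operator maps the
  kernel section \<open>gauss_kernel \<sigma> p\<close> to \<open>\<lambda>x. \<sigma> / sqrt s * exp (- (p - a * x)^2 / s)\<close>, so for
  finite kernel combinations \<open>c\<close>, \<open>d\<close> the pairing of \<open>d\<close> with the image of \<open>c\<close> is a cross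
  Gram form of Gaussians. The Gaussian kernel of width \<open>\<sigma>\<close> is, up to a constant, the
  autocorrelation of a Gaussian of half its variance; this turns Gram forms into \<open>L\<^sup>2\<close> inner
  products, and Cauchy--Schwarz bounds the cross form by the norm of \<open>c\<close> times the norm of the
  dilated combination \<open>x \<mapsto> a * x\<close> of \<open>d\<close>. Dilation by \<open>a \<le> 1\<close> widens the kernel, and by
  Young's inequality a Gaussian kernel of width \<open>\<tau> \<ge> \<sigma>\<close> has Gram form at most \<open>\<tau> / \<sigma>\<close> times
  that of width \<open>\<sigma>\<close>; the constants combine to \<open>exp (\<alpha> / 2 * t)\<close>.

  Dominated convergence carries the bound from kernel combinations to all of \<open>gauss_rkhs \<sigma>\<close>.
  Membership and the norm bound of the image then follow from a Riesz-type criterion: a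
  function whose point evaluations define a functional of norm at most \<open>M\<close> on kernel
  combinations lies in \<open>gauss_rkhs \<sigma>\<close> with norm at most \<open>M\<close>. It is proved by minimizing
  the energy \<open>kernel_inner k c c - 2 * comb_apply c F\<close> over combinations \<open>c\<close>.
\<close>

section \<open>Gaussian integrals\<close>

definition gaussian :: "real \<Rightarrow> real \<Rightarrow> real" where
  "gaussian v u = exp (- (u^2) / v)"

lemma gaussian_pos: "gaussian v u > 0"
  by (simp add: gaussian_def)

lemma gaussian_minus_commute: "gaussian v (a - b) = gaussian v (b - a)"
  by (simp add: gaussian_def power2_commute)

lemma gauss_kernel_eq_gaussian: "gauss_kernel \<sigma> p q = gaussian (\<sigma>^2) (p - q)"
  by (simp add: gauss_kernel_def gaussian_def)

lemma has_bochner_integral_gaussian: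
  assumes "v > 0"
  shows "has_bochner_integral lborel (\<lambda>y. gaussian v (y - m)) (sqrt (pi * v))"
proof -
  define s where "s = sqrt (v / 2)"
  have s: "s > 0" and s2: "2 * s^2 = v"
    using assms by (simp_all add: s_def)
  have "has_bochner_integral lborel (normal_density m s) 1"
    using integral_normal_density[OF s] integrable_normal_density[OF s]
    by (simp add: has_bochner_integral_iff)
  moreover have "(\<lambda>y. gaussian v (y - m)) = (\<lambda>y. sqrt (pi * v) * normal_density m s y)"
    using assms s2[symmetric] by (simp add: normal_density_def gaussian_def real_sqrt_mult)
  ultimately show ?thesis
    using has_bochner_integral_mult_right by fastforce
qed

lemma gaussian_mult:
  assumes v: "v > 0" and w: "w > 0"
  shows "gaussian v (y - u) * gaussian w (y - u') =
    gaussian (v + w) (u - u') * gaussian (v * w / (v + w)) (y - (w * u + v * u') / (v + w))"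
proof -
  define D where "D = v + w"
  have D: "D > 0" using v w by (simp add: D_def)
  have "(y - u)^2 / v + (y - u')^2 / w = (w * D * (y - u)^2 + v * D * (y - u')^2) / (D * v * w)"
    using v w D by (simp add: field_simps)
  also have "w * D * (y - u)^2 + v * D * (y - u')^2 = v * w * (u - u')^2 + (D * y - w * u - v * u')^2"
    by (simp add: D_def power2_eq_square algebra_simps)
  also have "(v * w * (u - u')^2 + (D * y - w * u - v * u')^2) / (D * v * w) =
      (u - u')^2 / D + (D * y - w * u - v * u')^2 / (D * v * w)"
    using v w D by (simp add: field_simps)
  also have "(D * y - w * u - v * u')^2 / (D * v * w) = (y - (w * u + v * u') / D)^2 / (v * w / D)"
    using v w D by (simp add: field_simps power2_eq_square)
  finally show ?thesis
    by (simp add: gaussian_def D_def exp_add[symmetric] minus_divide_left[symmetric] del: minus_divide_left)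
qed

lemma gaussian_mult_same:
  assumes "v > 0"
  shows "gaussian v (z - p) * gaussian v (z - q) = gaussian (2 * v) (p - q) * gaussian (v / 2) (z - (p + q) / 2)"
proof -
  have "v + v = 2 * v" "v * v / (2 * v) = v / 2" "(v * p + v * q) / (2 * v) = (p + q) / 2"
    using assms by (simp_all add: field_simps)
  then show ?thesis
    using gaussian_mult[OF assms assms, of z p q] by (simp only:)
qed

lemma has_bochner_integral_gaussian_mult:
  assumes v: "v > 0" and w: "w > 0"
  shows "has_bochner_integral lborel (\<lambda>y. gaussian v (y - u) * gaussian w (y - u'))
           (sqrt (pi * v * w / (v + w)) * gaussian (v + w) (u - u'))"
proof -
  have "v * w / (v + w) > 0" using v w by simp
  then have "has_bochner_integral lborel
      (\<lambda>y. gaussian (v * w / (v + w)) (y - (w * u + v * u') / (v + w))) (sqrt (pi * (v * w / (v + w))))"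
    by (rule has_bochner_integral_gaussian)
  from has_bochner_integral_mult_left[OF this, of "gaussian (v + w) (u - u')"]
  show ?thesis
    by (simp add: gaussian_mult[OF v w] ac_simps)
qed

lemma has_bochner_integral_mono:
  fixes f g :: "'a \<Rightarrow> real"
  assumes "has_bochner_integral M f I" "has_bochner_integral M g J" "\<And>x. f x \<le> g x"
  shows "I \<le> J"
proof -
  have "integral\<^sup>L M f \<le> integral\<^sup>L M g"
    using assms by (intro integral_mono) (auto intro: integrable.intros)
  then show ?thesis using assms by (simp add: has_bochner_integral_integral_eq)
qed

lemma quadratic_nonneg_imp_discriminant:
  fixes X B Y :: real
  assumes Y: "Y \<ge> 0" and nonneg: "\<And>r. 0 \<le> X + 2 * r * B + r^2 * Y"
  shows "B^2 \<le> X * Y"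
proof (cases "Y = 0")
  case True
  have "B = 0"
  proof (rule ccontr)
    assume "B \<noteq> 0"
    then have "X + 2 * (- (X + 1) / (2 * B)) * B + (- (X + 1) / (2 * B))^2 * Y = -1"
      using True by (simp add: field_simps)
    then show False using nonneg[of "- (X + 1) / (2 * B)"] by simp
  qed
  then show ?thesis using True by simp
next
  case False
  then have "Y > 0" using Y by simp
  have "0 \<le> X + 2 * (- B / Y) * B + (- B / Y)^2 * Y" by (rule nonneg)
  also have "\<dots> = X - B^2 / Y" using \<open>Y > 0\<close> by (simp add: power2_eq_square field_simps)
  finally show ?thesis using \<open>Y > 0\<close> by (simp add: field_simps)
qed

lemma has_bochner_integral_Cauchy_Schwarz:
  fixes f g w :: "'a \<Rightarrow> real"
  assumes A: "has_bochner_integral M (\<lambda>x. (f x)^2 * w x) A"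
    and B: "has_bochner_integral M (\<lambda>x. f x * g x * w x) B"
    and C: "has_bochner_integral M (\<lambda>x. (g x)^2 * w x) C"
    and w: "\<And>x. w x \<ge> 0"
  shows "B^2 \<le> A * C"
proof (rule quadratic_nonneg_imp_discriminant)
  show "0 \<le> C" by (rule has_bochner_integral_mono[OF has_bochner_integral_zero C]) (simp add: w)
  fix r
  have "(\<lambda>x. (f x)^2 * w x + 2 * r * (f x * g x * w x) + r^2 * ((g x)^2 * w x)) =
      (\<lambda>x. (f x + r * g x)^2 * w x)"
    by (simp add: fun_eq_iff power2_eq_square algebra_simps)
  with has_bochner_integral_add[OF has_bochner_integral_add[OF A
        has_bochner_integral_mult_right[OF B, of "2 * r"]] has_bochner_integral_mult_right[OF C, of "r^2"]]
  have "has_bochner_integral M (\<lambda>x. (f x + r * g x)^2 * w x) (A + 2 * r * B + r^2 * C)"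
    by simp
  then show "0 \<le> A + 2 * r * B + r^2 * C"
    by (rule has_bochner_integral_mono[OF has_bochner_integral_zero]) (simp add: w)
qed

section \<open>Finite combinations and positive definite kernels\<close>

definition comb_apply :: "('a \<times> real) list \<Rightarrow> ('a \<Rightarrow> real) \<Rightarrow> real" where
  "comb_apply c F = (\<Sum>(p, a)\<leftarrow>c. a * F p)"

definition comb_scale :: "real \<Rightarrow> ('a \<times> real) list \<Rightarrow> ('a \<times> real) list" where
  "comb_scale r c = map (\<lambda>(p, a). (p, r * a)) c"

definition comb_map_points :: "('a \<Rightarrow> 'b) \<Rightarrow> ('a \<times> real) list \<Rightarrow> ('b \<times> real) list" where
  "comb_map_points f c = map (\<lambda>(p, a). (f p, a)) c"

lemma comb_apply_Nil [simp]: "comb_apply [] F = 0"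
  by (simp add: comb_apply_def)

lemma comb_apply_Cons [simp]: "comb_apply ((p, a) # c) F = a * F p + comb_apply c F"
  by (simp add: comb_apply_def)

lemma comb_apply_append [simp]: "comb_apply (c @ d) F = comb_apply c F + comb_apply d F"
  by (simp add: comb_apply_def)

lemma comb_apply_scale [simp]: "comb_apply (comb_scale r c) F = r * comb_apply c F"
  by (induction c) (auto simp: comb_scale_def algebra_simps)

lemma comb_apply_kcomb_diff [simp]: "comb_apply (kcomb_diff c d) F = comb_apply c F - comb_apply d F"
proof -
  have "comb_apply (map (\<lambda>(q, b). (q, - b)) d) F = - comb_apply d F"
    by (induction d) auto
  then show ?thesis by (simp add: kcomb_diff_def)
qed

lemma comb_apply_map_points [simp]: "comb_apply (comb_map_points f c) F = comb_apply c (\<lambda>p. F (f p))"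
  by (induction c) (auto simp: comb_map_points_def)

lemma comb_apply_zero [simp]: "comb_apply c (\<lambda>p. 0) = 0"
  by (induction c) auto

lemma comb_apply_add: "comb_apply c (\<lambda>p. F p + G p) = comb_apply c F + comb_apply c G"
  by (induction c) (auto simp: algebra_simps)

lemma comb_apply_diff: "comb_apply c (\<lambda>p. F p - G p) = comb_apply c F - comb_apply c G"
  by (induction c) (auto simp: algebra_simps)

lemma comb_apply_cmult: "comb_apply c (\<lambda>p. r * F p) = r * comb_apply c F"
  by (induction c) (auto simp: algebra_simps)

lemma comb_apply_mult_const: "comb_apply c F * r = comb_apply c (\<lambda>p. F p * r)"
  using comb_apply_cmult[of c r F] by (simp add: mult.commute)

lemma comb_apply_swap:
  "comb_apply c (\<lambda>p. comb_apply d (\<lambda>q. H p q)) = comb_apply d (\<lambda>q. comb_apply c (\<lambda>p. H p q))"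
  by (induction c) (auto simp: comb_apply_add comb_apply_cmult)

lemma comb_apply_mult:
  "comb_apply c F * comb_apply d G = comb_apply c (\<lambda>p. comb_apply d (\<lambda>q. F p * G q))"
proof (induction c)
  case (Cons x c)
  then show ?case by (cases x) (auto simp: algebra_simps comb_apply_cmult[symmetric])
qed (simp add: comb_apply_def)

lemma has_bochner_integral_comb_apply:
  assumes "\<And>p. has_bochner_integral M (F p) (I p)"
  shows "has_bochner_integral M (\<lambda>y. comb_apply c (\<lambda>p. F p y)) (comb_apply c I)"
proof (induction c)
  case (Cons x c)
  then show ?case
    by (cases x) (auto intro!: has_bochner_integral_add has_bochner_integral_mult_right assms)
qed (simp add: has_bochner_integral_zero)

lemma tendsto_comb_apply:
  assumes "\<And>p. (\<lambda>n. X n p) \<longlonglongrightarrow> Y p"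
  shows "(\<lambda>n. comb_apply c (X n)) \<longlonglongrightarrow> comb_apply c Y"
proof (induction c)
  case (Cons x c)
  then show ?case by (cases x) (auto intro!: tendsto_add tendsto_mult assms)
qed simp

lemma borel_measurable_comb_apply:
  assumes "\<And>p. F p \<in> borel_measurable M"
  shows "(\<lambda>y. comb_apply c (\<lambda>p. F p y)) \<in> borel_measurable M"
proof (induction c)
  case (Cons x c)
  then show ?case using assms by (cases x) auto
qed simp

definition kernel_inner :: "('a \<Rightarrow> 'a \<Rightarrow> real) \<Rightarrow> ('a \<times> real) list \<Rightarrow> ('a \<times> real) list \<Rightarrow> real" where
  "kernel_inner k c d = comb_apply c (\<lambda>p. comb_apply d (\<lambda>q. k p q))"

definition kernel_norm :: "('a \<Rightarrow> 'a \<Rightarrow> real) \<Rightarrow> ('a \<times> real) list \<Rightarrow> real" where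
  "kernel_norm k c = sqrt (kernel_inner k c c)"

definition pd_kernel :: "('a \<Rightarrow> 'a \<Rightarrow> real) \<Rightarrow> bool" where
  "pd_kernel k \<longleftrightarrow> (\<forall>p q. k p q = k q p) \<and> (\<forall>c. 0 \<le> kernel_inner k c c)"

lemma kernel_inner_append_left [simp]:
  "kernel_inner k (c @ c') d = kernel_inner k c d + kernel_inner k c' d"
  by (simp add: kernel_inner_def)

lemma kernel_inner_append_right [simp]:
  "kernel_inner k d (c @ c') = kernel_inner k d c + kernel_inner k d c'"
  by (simp add: kernel_inner_def comb_apply_add)

lemma kernel_inner_scale_left [simp]: "kernel_inner k (comb_scale r c) d = r * kernel_inner k c d"
  by (simp add: kernel_inner_def)

lemma kernel_inner_scale_right [simp]: "kernel_inner k d (comb_scale r c) = r * kernel_inner k d c"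
  by (simp add: kernel_inner_def comb_apply_cmult)

lemma kernel_inner_kcomb_diff_left [simp]:
  "kernel_inner k (kcomb_diff c c') d = kernel_inner k c d - kernel_inner k c' d"
  by (simp add: kernel_inner_def)

lemma kernel_inner_kcomb_diff_right [simp]:
  "kernel_inner k d (kcomb_diff c c') = kernel_inner k d c - kernel_inner k d c'"
  by (simp add: kernel_inner_def comb_apply_diff)

lemma kernel_inner_map_points:
  "kernel_inner k (comb_map_points f c) (comb_map_points f d) = kernel_inner (\<lambda>p q. k (f p) (f q)) c d"
  by (simp add: kernel_inner_def)

lemma kernel_inner_commute: "pd_kernel k \<Longrightarrow> kernel_inner k c d = kernel_inner k d c"
  unfolding kernel_inner_def pd_kernel_def by (subst comb_apply_swap) simp

lemma kernel_inner_nonneg: "pd_kernel k \<Longrightarrow> 0 \<le> kernel_inner k c c"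
  unfolding pd_kernel_def by blast

lemma kernel_norm_nonneg: "pd_kernel k \<Longrightarrow> 0 \<le> kernel_norm k c"
  by (simp add: kernel_norm_def kernel_inner_nonneg)

lemma kernel_norm_square: "pd_kernel k \<Longrightarrow> (kernel_norm k c)^2 = kernel_inner k c c"
  by (simp add: kernel_norm_def kernel_inner_nonneg)

lemma kernel_inner_expand:
  assumes "pd_kernel k"
  shows "kernel_inner k (c @ comb_scale r d) (c @ comb_scale r d) =
    kernel_inner k c c + 2 * r * kernel_inner k c d + r^2 * kernel_inner k d d"
  using kernel_inner_commute[OF assms, of d c] by (simp add: power2_eq_square algebra_simps)

lemma kernel_inner_Cauchy_Schwarz:
  assumes "pd_kernel k"
  shows "(kernel_inner k c d)^2 \<le> kernel_inner k c c * kernel_inner k d d"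
proof (rule quadratic_nonneg_imp_discriminant)
  show "0 \<le> kernel_inner k d d" by (rule kernel_inner_nonneg[OF assms])
  show "0 \<le> kernel_inner k c c + 2 * r * kernel_inner k c d + r^2 * kernel_inner k d d" for r
    using kernel_inner_nonneg[OF assms, of "c @ comb_scale r d"] by (simp only: kernel_inner_expand[OF assms])
qed

lemma abs_kernel_inner_le: "pd_kernel k \<Longrightarrow> \<bar>kernel_inner k c d\<bar> \<le> kernel_norm k c * kernel_norm k d"
  using real_sqrt_le_mono[OF kernel_inner_Cauchy_Schwarz, of k c d]
  by (simp add: kernel_norm_def real_sqrt_mult)

lemma kernel_norm_triangle:
  fixes k :: "real \<Rightarrow> real \<Rightarrow> real"
  assumes "pd_kernel k"
  shows "kernel_norm k c \<le> kernel_norm k (kcomb_diff c d) + kernel_norm k d"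
proof -
  let ?e = "kcomb_diff c d"
  have "(kernel_norm k c)^2 = (kernel_norm k ?e)^2 + 2 * kernel_inner k ?e d + (kernel_norm k d)^2"
    using kernel_inner_commute[OF assms, of d c]
    by (simp add: kernel_norm_square[OF assms] algebra_simps)
  also have "\<dots> \<le> (kernel_norm k ?e + kernel_norm k d)^2"
    using abs_kernel_inner_le[OF assms, of ?e d] by (simp add: power2_eq_square algebra_simps)
  finally show ?thesis
    using kernel_norm_nonneg[OF assms] by (meson add_nonneg_nonneg power2_le_imp_le)
qed

lemma abs_kernel_norm_diff_le:
  fixes k :: "real \<Rightarrow> real \<Rightarrow> real"
  assumes "pd_kernel k"
  shows "\<bar>kernel_norm k c - kernel_norm k d\<bar> \<le> kernel_norm k (kcomb_diff c d)"
proof -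
  have "kernel_norm k (kcomb_diff d c) = kernel_norm k (kcomb_diff c d)"
    using kernel_inner_commute[OF assms, of d c] by (simp add: kernel_norm_def algebra_simps)
  then show ?thesis
    using kernel_norm_triangle[OF assms, of c d] kernel_norm_triangle[OF assms, of d c] by linarith
qed

section \<open>The Gaussian kernel\<close>

lemma kcomb_sqnorm_eq_kernel_inner: "kcomb_sqnorm \<sigma> c = kernel_inner (gauss_kernel \<sigma>) c c"
proof -
  have inner: "(\<Sum>(q, b)\<leftarrow>d. a * b * K q) = a * comb_apply d K" for a d K
    by (induction d) (auto simp: algebra_simps)
  have "kcomb_sqnorm \<sigma> c = (\<Sum>(p, a)\<leftarrow>c. a * comb_apply c (\<lambda>q. gauss_kernel \<sigma> p q))"
    unfolding kcomb_sqnorm_def by (simp add: inner case_prod_beta)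
  then show ?thesis
    by (simp add: kernel_inner_def comb_apply_def)
qed

lemma kcomb_eval_eq_kernel_inner: "kcomb_eval \<sigma> c x = kernel_inner (gauss_kernel \<sigma>) c [(x, 1)]"
  by (simp add: kcomb_eval_def kernel_inner_def comb_apply_def)

lemma kcomb_eval_eq_comb_apply: "kcomb_eval \<sigma> c y = comb_apply c (\<lambda>p. gaussian (\<sigma>^2) (y - p))"
  by (simp add: kcomb_eval_def comb_apply_def gauss_kernel_eq_gaussian gaussian_minus_commute[of "\<sigma>^2" _ y])

lemma borel_measurable_kcomb_eval: "kcomb_eval \<sigma> c \<in> borel_measurable borel"
  unfolding kcomb_eval_eq_comb_apply[abs_def]
  by (intro borel_measurable_comb_apply) (simp add: gaussian_def)

text \<open>Up to a constant, \<open>gauss_kernel \<sigma>\<close> is the autocorrelation of \<open>gaussian (\<sigma>^2 / 2)\<close>, so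
  its Gram forms are squared \<open>L\<^sup>2\<close> norms of the following functions.\<close>

definition gauss_kernel_root :: "real \<Rightarrow> (real \<times> real) list \<Rightarrow> real \<Rightarrow> real" where
  "gauss_kernel_root \<sigma> c z = comb_apply c (\<lambda>p. gaussian (\<sigma>^2 / 2) (z - p))"

lemma has_bochner_integral_gauss_kernel_root_mult:
  assumes \<sigma>: "\<sigma> > 0" and \<rho>: "\<rho> > 0"
  shows "has_bochner_integral lborel (\<lambda>z. gauss_kernel_root \<sigma> c z * gauss_kernel_root \<rho> d z)
    (sqrt (pi * \<sigma>^2 * \<rho>^2 / (2 * (\<sigma>^2 + \<rho>^2))) *
      comb_apply c (\<lambda>p. comb_apply d (\<lambda>q. gaussian ((\<sigma>^2 + \<rho>^2) / 2) (p - q))))"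
proof -
  have v: "\<sigma>^2 / 2 > 0" "\<rho>^2 / 2 > 0" using \<sigma> \<rho> by simp_all
  have "has_bochner_integral lborel
      (\<lambda>z. comb_apply c (\<lambda>p. comb_apply d (\<lambda>q. gaussian (\<sigma>^2 / 2) (z - p) * gaussian (\<rho>^2 / 2) (z - q))))
      (comb_apply c (\<lambda>p. comb_apply d (\<lambda>q. sqrt (pi * (\<sigma>^2 / 2) * (\<rho>^2 / 2) / (\<sigma>^2 / 2 + \<rho>^2 / 2)) *
        gaussian (\<sigma>^2 / 2 + \<rho>^2 / 2) (p - q))))"
    by (intro has_bochner_integral_comb_apply has_bochner_integral_gaussian_mult v)
  moreover have "\<sigma>^2 / 2 + \<rho>^2 / 2 = (\<sigma>^2 + \<rho>^2) / 2"
    "pi * (\<sigma>^2 / 2) * (\<rho>^2 / 2) / ((\<sigma>^2 + \<rho>^2) / 2) = pi * \<sigma>^2 * \<rho>^2 / (2 * (\<sigma>^2 + \<rho>^2))"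
    by (simp_all add: field_simps)
  ultimately show ?thesis
    unfolding gauss_kernel_root_def comb_apply_mult by (simp only: comb_apply_cmult)
qed

lemma has_bochner_integral_gauss_kernel_root_square:
  assumes "\<sigma> > 0"
  shows "has_bochner_integral lborel (\<lambda>z. (gauss_kernel_root \<sigma> c z)^2)
           (sqrt pi * \<sigma> / 2 * kernel_inner (gauss_kernel \<sigma>) c c)"
proof -
  have "(\<sigma>^2 + \<sigma>^2) / 2 = \<sigma>^2" "sqrt (pi * \<sigma>^2 * \<sigma>^2 / (2 * (\<sigma>^2 + \<sigma>^2))) = sqrt pi * \<sigma> / 2"
    using assms by (simp_all add: real_sqrt_mult real_sqrt_divide power2_eq_square)
  then have "has_bochner_integral lborel (\<lambda>z. gauss_kernel_root \<sigma> c z * gauss_kernel_root \<sigma> c z)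
      (sqrt pi * \<sigma> / 2 * kernel_inner (gauss_kernel \<sigma>) c c)"
    using has_bochner_integral_gauss_kernel_root_mult[OF assms assms, of c c]
    unfolding kernel_inner_def gauss_kernel_eq_gaussian by (simp only:)
  then show ?thesis
    by (simp only: power2_eq_square)
qed

lemma pd_gauss_kernel: "\<sigma> > 0 \<Longrightarrow> pd_kernel (gauss_kernel \<sigma>)"
  unfolding pd_kernel_def
proof (intro conjI allI)
  show "gauss_kernel \<sigma> p q = gauss_kernel \<sigma> q p" for p q
    by (simp add: gauss_kernel_def power2_commute)
  assume "\<sigma> > 0"
  have "0 < sqrt pi * \<sigma> / 2" using \<open>\<sigma> > 0\<close> by simp
  then show "0 \<le> kernel_inner (gauss_kernel \<sigma>) c c" for c
    using has_bochner_integral_mono[OF has_bochner_integral_zero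
        has_bochner_integral_gauss_kernel_root_square[OF \<open>\<sigma> > 0\<close>, of c]]
    by (simp add: zero_le_mult_iff)
qed

lemma abs_kcomb_eval_le:
  assumes "\<sigma> > 0"
  shows "\<bar>kcomb_eval \<sigma> c x\<bar> \<le> kernel_norm (gauss_kernel \<sigma>) c"
proof -
  have "kernel_norm (gauss_kernel \<sigma>) [(x, 1)] = 1"
    by (simp add: kernel_norm_def kernel_inner_def gauss_kernel_def)
  then show ?thesis
    using abs_kernel_inner_le[OF pd_gauss_kernel[OF assms], of c "[(x, 1)]"]
    by (simp add: kcomb_eval_eq_kernel_inner)
qed

lemma gauss_kernel_cross_bound:
  assumes \<sigma>: "\<sigma> > 0" and \<rho>: "\<rho> > 0"
  shows "(comb_apply c (\<lambda>p. comb_apply d (\<lambda>q. gaussian ((\<sigma>^2 + \<rho>^2) / 2) (p - q))))^2 \<le>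
    (\<sigma>^2 + \<rho>^2) / (2 * \<sigma> * \<rho>) * kernel_inner (gauss_kernel \<sigma>) c c * kernel_inner (gauss_kernel \<rho>) d d"
    (is "?T^2 \<le> ?r * ?Bc * ?Bd")
proof -
  define K where "K = pi * \<sigma>^2 * \<rho>^2 / (2 * (\<sigma>^2 + \<rho>^2))"
  have "\<sigma>^2 + \<rho>^2 > 0" using \<sigma> by (simp add: add_pos_nonneg)
  then have K: "K > 0" using \<sigma> \<rho> by (simp add: K_def)
  have "K * ?T^2 = (sqrt K * ?T)^2"
    using K by (simp add: power_mult_distrib)
  also have "\<dots> \<le> (sqrt pi * \<sigma> / 2 * ?Bc) * (sqrt pi * \<rho> / 2 * ?Bd)"
    using has_bochner_integral_gauss_kernel_root_mult[OF \<sigma> \<rho>, of c d]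
      has_bochner_integral_gauss_kernel_root_square[OF \<sigma>, of c]
      has_bochner_integral_gauss_kernel_root_square[OF \<rho>, of d]
    by (intro has_bochner_integral_Cauchy_Schwarz[where w = "\<lambda>_. 1"]) (simp_all add: K_def)
  also have "\<dots> = (pi * \<sigma> * \<rho> / 4) * ?Bc * ?Bd"
  proof -
    have "sqrt pi * (sqrt pi * x) = pi * x" for x
      by (simp add: mult.assoc[symmetric])
    then show ?thesis by (simp add: field_simps)
  qed
  also have "pi * \<sigma> * \<rho> / 4 = K * ?r"
  proof -
    have cancel: "S \<noteq> 0 \<Longrightarrow> pi * \<sigma> * \<rho> / 4 = pi * \<sigma>^2 * \<rho>^2 / (2 * S) * (S / (2 * \<sigma> * \<rho>))" for S
      using \<sigma> \<rho> by (simp add: field_simps power2_eq_square)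
    show ?thesis
      unfolding K_def by (rule cancel) (use \<sigma> in simp)
  qed
  finally have "K * ?T^2 \<le> K * (?r * ?Bc * ?Bd)"
    by (simp only: mult.assoc)
  then show ?thesis
    by (rule mult_left_le_imp_le) (use K in simp)
qed

lemma gauss_kernel_root_square_eq:
  assumes "\<sigma> > 0"
  shows "(gauss_kernel_root \<sigma> c z)^2 = comb_apply c (\<lambda>p. comb_apply c (\<lambda>q.
    gaussian (\<sigma>^2) (p - q) * gaussian (\<sigma>^2 / 4) (z - (p + q) / 2)))"
proof -
  have "gaussian (\<sigma>^2 / 2) (z - p) * gaussian (\<sigma>^2 / 2) (z - q) =
      gaussian (\<sigma>^2) (p - q) * gaussian (\<sigma>^2 / 4) (z - (p + q) / 2)" for p q
    using gaussian_mult_same[of "\<sigma>^2 / 2" z p q] assms by simp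
  then show ?thesis
    unfolding gauss_kernel_root_def power2_eq_square[of "comb_apply c _"] comb_apply_mult by (simp only:)
qed

text \<open>The closed form of \<open>\<Psi>\<close> below is what Fubini's theorem predicts: its integral is the
  product of the integrals of the squared root and of the Gaussian.\<close>

lemma gauss_kernel_root_square_convolution:
  assumes \<sigma>: "\<sigma> > 0" and u: "u > 0"
  obtains \<Psi> where
    "\<And>w. has_bochner_integral lborel (\<lambda>z. (gauss_kernel_root \<sigma> c z)^2 * gaussian u (z - w)) (\<Psi> w)"
    "has_bochner_integral lborel \<Psi> (sqrt (pi * u) * (sqrt pi * \<sigma> / 2 * kernel_inner (gauss_kernel \<sigma>) c c))"
proof
  define v where "v = \<sigma>^2 / 4"
  have v: "v > 0" using \<sigma> by (simp add: v_def)
  define \<kappa> where "\<kappa> = sqrt (pi * v * u / (v + u))"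
  define \<Psi> where "\<Psi> w = comb_apply c (\<lambda>p. comb_apply c (\<lambda>q.
      gaussian (\<sigma>^2) (p - q) * (\<kappa> * gaussian (v + u) ((p + q) / 2 - w))))" for w
  have square: "(gauss_kernel_root \<sigma> c z)^2 * gaussian u (z - w) = comb_apply c (\<lambda>p. comb_apply c (\<lambda>q.
      gaussian (\<sigma>^2) (p - q) * (gaussian v (z - (p + q) / 2) * gaussian u (z - w))))" for z w
    unfolding gauss_kernel_root_square_eq[OF \<sigma>] v_def by (simp only: comb_apply_mult_const mult.assoc)
  show "has_bochner_integral lborel (\<lambda>z. (gauss_kernel_root \<sigma> c z)^2 * gaussian u (z - w)) (\<Psi> w)" for w
    unfolding square \<Psi>_def \<kappa>_def
    by (intro has_bochner_integral_comb_apply has_bochner_integral_mult_right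
        has_bochner_integral_gaussian_mult v u)
  have "has_bochner_integral lborel \<Psi> (comb_apply c (\<lambda>p. comb_apply c (\<lambda>q.
      gaussian (\<sigma>^2) (p - q) * (\<kappa> * sqrt (pi * (v + u))))))"
    unfolding \<Psi>_def gaussian_minus_commute[of "v + u" "(_ + _) / 2"]
    by (intro has_bochner_integral_comb_apply has_bochner_integral_mult_right
        has_bochner_integral_gaussian) (use v u in simp)
  moreover have "\<kappa> * sqrt (pi * (v + u)) = sqrt (pi * u) * (sqrt pi * \<sigma> / 2)"
  proof -
    have "\<kappa> * sqrt (pi * (v + u)) = sqrt (pi * v * u / (v + u) * (pi * (v + u)))"
      unfolding \<kappa>_def by (rule real_sqrt_mult[symmetric])
    also have "pi * v * u / (v + u) * (pi * (v + u)) = (pi * \<sigma> / 2)^2 * u"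
      using v u by (simp add: v_def field_simps power2_eq_square)
    finally show ?thesis
      using \<sigma> by (simp add: real_sqrt_mult)
  qed
  ultimately show "has_bochner_integral lborel \<Psi> (sqrt (pi * u) * (sqrt pi * \<sigma> / 2 * kernel_inner (gauss_kernel \<sigma>) c c))"
    by (simp only: comb_apply_mult_const[symmetric] kernel_inner_def gauss_kernel_eq_gaussian mult.commute)
      (simp add: mult.assoc)
qed

lemma has_bochner_integral_gauss_kernel_root_convolution:
  assumes \<sigma>: "\<sigma> > 0" and u: "u > 0" and \<tau>: "\<tau>^2 = \<sigma>^2 + 2 * u"
  shows "has_bochner_integral lborel (\<lambda>z. gauss_kernel_root \<sigma> c z * gaussian u (z - w))
           (sqrt (pi * \<sigma>^2 * u / \<tau>^2) * gauss_kernel_root \<tau> c w)"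
proof -
  have v: "\<sigma>^2 / 2 > 0" using \<sigma> by simp
  have "\<sigma>^2 / 2 + u = \<tau>^2 / 2" "pi * (\<sigma>^2 / 2) * u / (\<tau>^2 / 2) = pi * \<sigma>^2 * u / \<tau>^2"
    using \<tau> by (simp_all add: field_simps)
  with has_bochner_integral_comb_apply[OF has_bochner_integral_gaussian_mult[OF v u, of _ w], of c]
  show ?thesis
    unfolding gauss_kernel_root_def comb_apply_mult_const comb_apply_cmult
    by (simp only: gaussian_minus_commute[of "\<tau>^2 / 2" _ w])
qed

text \<open>Young's inequality for the convolution of \<^const>\<open>gauss_kernel_root\<close> with a Gaussian, obtained
  from the weighted Cauchy--Schwarz inequality at each point and integration.\<close>

lemma gauss_kernel_root_Young:
  assumes \<sigma>: "\<sigma> > 0" and u: "u > 0" and \<tau>: "\<tau> > 0" "\<tau>^2 = \<sigma>^2 + 2 * u"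
  shows "pi * \<sigma>^2 * u / \<tau>^2 * (sqrt pi * \<tau> / 2 * kernel_inner (gauss_kernel \<tau>) c c) \<le>
    pi * u * (sqrt pi * \<sigma> / 2 * kernel_inner (gauss_kernel \<sigma>) c c)"
proof -
  define \<kappa> where "\<kappa> = sqrt (pi * \<sigma>^2 * u / \<tau>^2)"
  obtain \<Psi> where \<Psi>:
    "\<And>w. has_bochner_integral lborel (\<lambda>z. (gauss_kernel_root \<sigma> c z)^2 * gaussian u (z - w)) (\<Psi> w)"
    "has_bochner_integral lborel \<Psi> (sqrt (pi * u) * (sqrt pi * \<sigma> / 2 * kernel_inner (gauss_kernel \<sigma>) c c))"
    using gauss_kernel_root_square_convolution[OF \<sigma> u] by blast
  have Jensen: "(\<kappa> * gauss_kernel_root \<tau> c w)^2 \<le> sqrt (pi * u) * \<Psi> w" for w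
  proof -
    have "(\<kappa> * gauss_kernel_root \<tau> c w)^2 \<le> \<Psi> w * sqrt (pi * u)"
    proof (rule has_bochner_integral_Cauchy_Schwarz[where g = "\<lambda>_. 1"])
      show "has_bochner_integral lborel
          (\<lambda>z. gauss_kernel_root \<sigma> c z * 1 * gaussian u (z - w)) (\<kappa> * gauss_kernel_root \<tau> c w)"
        using has_bochner_integral_gauss_kernel_root_convolution[OF \<sigma> u \<tau>(2), of c w] by (simp add: \<kappa>_def)
      show "has_bochner_integral lborel (\<lambda>z. 1^2 * gaussian u (z - w)) (sqrt (pi * u))"
        using has_bochner_integral_gaussian[OF u] by simp
    qed (use \<Psi>(1) in \<open>auto simp: less_imp_le[OF gaussian_pos]\<close>)
    then show ?thesis by (simp add: mult.commute)
  qed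
  have "\<kappa>^2 * (sqrt pi * \<tau> / 2 * kernel_inner (gauss_kernel \<tau>) c c) \<le>
      sqrt (pi * u) * (sqrt (pi * u) * (sqrt pi * \<sigma> / 2 * kernel_inner (gauss_kernel \<sigma>) c c))"
  proof (rule has_bochner_integral_mono[OF _ _ Jensen])
    show "has_bochner_integral lborel (\<lambda>w. (\<kappa> * gauss_kernel_root \<tau> c w)^2)
        (\<kappa>^2 * (sqrt pi * \<tau> / 2 * kernel_inner (gauss_kernel \<tau>) c c))"
      unfolding power_mult_distrib
      by (intro has_bochner_integral_mult_right has_bochner_integral_gauss_kernel_root_square \<tau>(1))
  qed (rule has_bochner_integral_mult_right[OF \<Psi>(2)])
  moreover have "\<kappa>^2 = pi * \<sigma>^2 * u / \<tau>^2"
    using u by (simp add: \<kappa>_def)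
  ultimately show ?thesis
    using u by (simp add: mult.assoc[symmetric])
qed

lemma gauss_kernel_inner_le_wider:
  assumes \<sigma>: "\<sigma> > 0" and \<tau>: "\<sigma> \<le> \<tau>"
  shows "kernel_inner (gauss_kernel \<tau>) c c \<le> \<tau> / \<sigma> * kernel_inner (gauss_kernel \<sigma>) c c"
proof (cases "\<sigma> = \<tau>")
  case False
  define u where "u = (\<tau>^2 - \<sigma>^2) / 2"
  have u: "u > 0" using \<sigma> \<tau> False by (simp add: u_def power_strict_mono)
  have "(pi * u * sqrt pi * \<sigma> / 2) * (\<sigma> / \<tau> * kernel_inner (gauss_kernel \<tau>) c c) =
      pi * \<sigma>^2 * u / \<tau>^2 * (sqrt pi * \<tau> / 2 * kernel_inner (gauss_kernel \<tau>) c c)"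
    using \<sigma> \<tau> by (simp add: field_simps power2_eq_square)
  also have "\<dots> \<le> pi * u * (sqrt pi * \<sigma> / 2 * kernel_inner (gauss_kernel \<sigma>) c c)"
    by (rule gauss_kernel_root_Young[OF \<sigma> u]) (use \<sigma> \<tau> u_def in simp_all)
  also have "\<dots> = (pi * u * sqrt pi * \<sigma> / 2) * kernel_inner (gauss_kernel \<sigma>) c c"
    by simp
  finally have "\<sigma> / \<tau> * kernel_inner (gauss_kernel \<tau>) c c \<le> kernel_inner (gauss_kernel \<sigma>) c c"
    by (rule mult_left_le_imp_le) (use \<sigma> u in simp)
  then show ?thesis
    using \<sigma> \<tau> by (simp add: field_simps)
qed (use \<sigma> in simp)

lemma gauss_dilation_bilinear_bound:
  assumes \<sigma>: "\<sigma> > 0" and a: "0 < a" "a \<le> 1" and s: "\<sigma>^2 \<le> s"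
  shows "(comb_apply c (\<lambda>p. comb_apply d (\<lambda>x. gaussian s (p - a * x))))^2 \<le>
    s / (a * \<sigma>^2) * kernel_inner (gauss_kernel \<sigma>) c c * kernel_inner (gauss_kernel \<sigma>) d d"
proof -
  define \<rho> where "\<rho> = sqrt (2 * s - \<sigma>^2)"
    \<comment> \<open>so that \<open>s = (\<sigma>^2 + \<rho>^2) / 2\<close>, the variance in the cross bound\<close>
  have "\<sigma>^2 \<le> 2 * s" using s zero_le_power2[of \<sigma>] by linarith
  then have \<rho>2: "\<rho>^2 = 2 * s - \<sigma>^2" by (simp add: \<rho>_def)
  have \<sigma>\<rho>: "\<sigma> \<le> \<rho>"
    unfolding \<rho>_def by (rule real_le_rsqrt) (use s in simp)
  then have \<rho>: "\<rho> > 0" using \<sigma> by simp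
  have "\<sigma> * a \<le> \<sigma>" using mult_left_le[of a \<sigma>] a \<sigma> by simp
  then have \<rho>a: "\<sigma> \<le> \<rho> / a" using \<sigma>\<rho> a by (simp add: le_divide_eq)
  have "gauss_kernel \<rho> (a * x) (a * y) = gauss_kernel (\<rho> / a) x y" for x y
    using a by (simp add: gauss_kernel_def power_divide power_mult_distrib right_diff_distrib[symmetric])
  then have scaled: "kernel_inner (gauss_kernel \<rho>) (comb_map_points ((*) a) d) (comb_map_points ((*) a) d) =
      kernel_inner (gauss_kernel (\<rho> / a)) d d"
    by (simp add: kernel_inner_map_points)
  have "(comb_apply c (\<lambda>p. comb_apply d (\<lambda>x. gaussian s (p - a * x))))^2 \<le>
      (\<sigma>^2 + \<rho>^2) / (2 * \<sigma> * \<rho>) * kernel_inner (gauss_kernel \<sigma>) c c * kernel_inner (gauss_kernel (\<rho> / a)) d d"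
    using gauss_kernel_cross_bound[OF \<sigma> \<rho>, of c "comb_map_points ((*) a) d"] by (simp add: \<rho>2 scaled)
  also have "\<dots> \<le> (\<sigma>^2 + \<rho>^2) / (2 * \<sigma> * \<rho>) * kernel_inner (gauss_kernel \<sigma>) c c *
      ((\<rho> / a) / \<sigma> * kernel_inner (gauss_kernel \<sigma>) d d)"
    using gauss_kernel_inner_le_wider[OF \<sigma> \<rho>a, of d] kernel_inner_nonneg[OF pd_gauss_kernel[OF \<sigma>], of c] \<sigma> \<rho>
    by (intro mult_left_mono) simp_all
  also have "\<dots> = s / (a * \<sigma>^2) * kernel_inner (gauss_kernel \<sigma>) c c * kernel_inner (gauss_kernel \<sigma>) d d"
  proof -
    have "\<sigma>^2 + \<rho>^2 = 2 * s" by (simp add: \<rho>2)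
    then show ?thesis
      using \<sigma> \<rho> a by (simp add: field_simps power2_eq_square)
  qed
  finally show ?thesis .
qed

lemma abs_gauss_dilation_le:
  assumes \<sigma>: "\<sigma> > 0" and a: "0 < a" "a \<le> 1" and s: "\<sigma>^2 \<le> s"
  shows "\<bar>comb_apply d (\<lambda>x. \<sigma> / sqrt s * comb_apply c (\<lambda>p. gaussian s (p - a * x)))\<bar> \<le>
    kernel_norm (gauss_kernel \<sigma>) c * kernel_norm (gauss_kernel \<sigma>) d / sqrt a"
proof -
  let ?T = "comb_apply c (\<lambda>p. comb_apply d (\<lambda>x. gaussian s (p - a * x)))"
  have pd: "pd_kernel (gauss_kernel \<sigma>)" by (rule pd_gauss_kernel[OF \<sigma>])
  have "0 < \<sigma>^2" using \<sigma> by simp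
  then have "s > 0" using s by linarith
  have "(\<sigma> / sqrt s * ?T)^2 = \<sigma>^2 / s * ?T^2"
    using \<open>s > 0\<close> by (simp add: power_mult_distrib power_divide)
  also have "\<dots> \<le> \<sigma>^2 / s * (s / (a * \<sigma>^2) * kernel_inner (gauss_kernel \<sigma>) c c * kernel_inner (gauss_kernel \<sigma>) d d)"
    by (rule mult_left_mono[OF gauss_dilation_bilinear_bound[OF \<sigma> a s]]) (use \<open>s > 0\<close> in simp)
  also have "\<dots> = (kernel_norm (gauss_kernel \<sigma>) c * kernel_norm (gauss_kernel \<sigma>) d / sqrt a)^2"
    using \<sigma> \<open>s > 0\<close> a by (simp add: power_mult_distrib power_divide kernel_norm_square[OF pd])
  finally have "\<bar>\<sigma> / sqrt s * ?T\<bar> \<le> \<bar>kernel_norm (gauss_kernel \<sigma>) c * kernel_norm (gauss_kernel \<sigma>) d / sqrt a\<bar>"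
    by (simp only: abs_le_square_iff)
  then have bound: "\<bar>\<sigma> / sqrt s * ?T\<bar> \<le> kernel_norm (gauss_kernel \<sigma>) c * kernel_norm (gauss_kernel \<sigma>) d / sqrt a"
    using kernel_norm_nonneg[OF pd] a by simp
  have "comb_apply d (\<lambda>x. \<sigma> / sqrt s * comb_apply c (\<lambda>p. gaussian s (p - a * x))) = \<sigma> / sqrt s * ?T"
    by (simp only: comb_apply_cmult comb_apply_swap[of d])
  with bound show ?thesis by (simp only:)
qed

section \<open>The reproducing kernel Hilbert space\<close>

lemma sqrt_kcomb_sqnorm: "sqrt (kcomb_sqnorm \<sigma> c) = kernel_norm (gauss_kernel \<sigma>) c"
  by (simp add: kernel_norm_def kcomb_sqnorm_eq_kernel_inner)

lemma convergent_kernel_norm_rkhs_approx: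
  assumes \<sigma>: "\<sigma> > 0" and approx: "rkhs_approx \<sigma> f g"
  shows "convergent (\<lambda>n. kernel_norm (gauss_kernel \<sigma>) (g n))"
proof -
  have "Cauchy (\<lambda>n. kernel_norm (gauss_kernel \<sigma>) (g n))"
  proof (rule metric_CauchyI)
    fix \<epsilon> :: real
    assume "\<epsilon> > 0"
    then obtain N where "\<forall>m\<ge>N. \<forall>n\<ge>N. kernel_norm (gauss_kernel \<sigma>) (kcomb_diff (g m) (g n)) < \<epsilon>"
      using approx unfolding rkhs_approx_def sqrt_kcomb_sqnorm by blast
    then show "\<exists>N. \<forall>m\<ge>N. \<forall>n\<ge>N. dist (kernel_norm (gauss_kernel \<sigma>) (g m)) (kernel_norm (gauss_kernel \<sigma>) (g n)) < \<epsilon>"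
      using abs_kernel_norm_diff_le[OF pd_gauss_kernel[OF \<sigma>]] by (metis dist_real_def le_less_trans)
  qed
  then show ?thesis by (simp add: Cauchy_convergent_iff)
qed

lemma gauss_rkhs_norm_le:
  assumes \<sigma>: "\<sigma> > 0" and "rkhs_approx \<sigma> f g" and "(\<lambda>n. kernel_norm (gauss_kernel \<sigma>) (g n)) \<longlonglongrightarrow> L"
  shows "gauss_rkhs_norm \<sigma> f \<le> L"
  unfolding gauss_rkhs_norm_def sqrt_kcomb_sqnorm
proof (rule cInf_lower)
  show "L \<in> {L. \<exists>g. rkhs_approx \<sigma> f g \<and> (\<lambda>n. kernel_norm (gauss_kernel \<sigma>) (g n)) \<longlonglongrightarrow> L}"
    using assms by blast
  show "bdd_below {L. \<exists>g. rkhs_approx \<sigma> f g \<and> (\<lambda>n. kernel_norm (gauss_kernel \<sigma>) (g n)) \<longlonglongrightarrow> L}"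
    using kernel_norm_nonneg[OF pd_gauss_kernel[OF \<sigma>]]
    by (intro bdd_belowI[of _ 0]) (blast intro: LIMSEQ_le_const)
qed

lemma minimizing_sequence:
  fixes J :: "'a \<Rightarrow> real"
  assumes "bdd_below (range J)"
  obtains g where "(\<lambda>n. J (g n)) \<longlonglongrightarrow> Inf (range J)"
proof -
  have "\<exists>c. J c < Inf (range J) + inverse (real (Suc n))" for n
    using cInf_less_iff[of "range J" "Inf (range J) + inverse (real (Suc n))"] assms by simp
  then obtain g where g: "\<And>n. J (g n) < Inf (range J) + inverse (real (Suc n))"
    by metis
  have "(\<lambda>n. J (g n)) \<longlonglongrightarrow> Inf (range J)"
  proof (rule tendsto_sandwich)
    show "\<forall>\<^sub>F n in sequentially. Inf (range J) \<le> J (g n)"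
      using cInf_lower[OF _ assms] by simp
    show "\<forall>\<^sub>F n in sequentially. J (g n) \<le> Inf (range J) + inverse (real (Suc n))"
      using g by (simp add: less_imp_le)
    show "(\<lambda>n. Inf (range J) + inverse (real (Suc n))) \<longlonglongrightarrow> Inf (range J)"
      using tendsto_add[OF tendsto_const LIMSEQ_inverse_real_of_nat] by simp
  qed simp
  then show ?thesis by (rule that)
qed

text \<open>For a bounded functional \<open>F\<close>, combinations of nearly minimal energy approximate the
  representer of \<open>F\<close>.\<close>

definition riesz_energy :: "('a \<Rightarrow> 'a \<Rightarrow> real) \<Rightarrow> ('a \<Rightarrow> real) \<Rightarrow> ('a \<times> real) list \<Rightarrow> real" where
  "riesz_energy k F c = kernel_inner k c c - 2 * comb_apply c F"

lemma riesz_energy_lower_bound: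
  assumes "pd_kernel k" and "\<bar>comb_apply c F\<bar> \<le> M * kernel_norm k c"
  shows "- (M^2) \<le> riesz_energy k F c"
proof -
  have "- (M^2) \<le> (kernel_norm k c - M)^2 - M^2" by simp
  also have "\<dots> = kernel_inner k c c - 2 * (M * kernel_norm k c)"
    by (simp add: kernel_norm_square[OF assms(1), symmetric] power2_eq_square algebra_simps)
  also have "\<dots> \<le> riesz_energy k F c"
    using assms(2) by (simp add: riesz_energy_def)
  finally show ?thesis .
qed

lemma riesz_energy_variation:
  assumes pd: "pd_kernel k" and min: "\<And>c. m \<le> riesz_energy k F c"
  shows "\<bar>kernel_inner k c d - comb_apply d F\<bar> \<le> sqrt (riesz_energy k F c - m) * kernel_norm k d"
proof -
  have "(kernel_inner k c d - comb_apply d F)^2 \<le> (riesz_energy k F c - m) * kernel_inner k d d"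
  proof (rule quadratic_nonneg_imp_discriminant)
    show "0 \<le> kernel_inner k d d" by (rule kernel_inner_nonneg[OF pd])
    fix r
    have "riesz_energy k F (c @ comb_scale r d) =
        riesz_energy k F c + 2 * r * (kernel_inner k c d - comb_apply d F) + r^2 * kernel_inner k d d"
      unfolding riesz_energy_def kernel_inner_expand[OF pd] by (simp add: algebra_simps)
    then show "0 \<le> riesz_energy k F c - m + 2 * r * (kernel_inner k c d - comb_apply d F) + r^2 * kernel_inner k d d"
      using min[of "c @ comb_scale r d"] by simp
  qed
  then show ?thesis
    using real_sqrt_le_mono by (fastforce simp: kernel_norm_def real_sqrt_mult)
qed

lemma riesz_energy_parallelogram:
  fixes k :: "real \<Rightarrow> real \<Rightarrow> real"
  assumes pd: "pd_kernel k" and min: "\<And>c. m \<le> riesz_energy k F c"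
  shows "kernel_inner k (kcomb_diff c d) (kcomb_diff c d) \<le> 2 * ((riesz_energy k F c - m) + (riesz_energy k F d - m))"
proof -
  have "kernel_inner k (kcomb_diff c d) (kcomb_diff c d) =
      2 * (riesz_energy k F c + riesz_energy k F d - 2 * riesz_energy k F (comb_scale (1/2) (c @ d)))"
    using kernel_inner_commute[OF pd, of d c] by (simp add: riesz_energy_def algebra_simps)
  then show ?thesis using min[of "comb_scale (1/2) (c @ d)"] by simp
qed

lemma kernel_norm_le_riesz_energy:
  assumes pd: "pd_kernel k" and min: "\<And>c. m \<le> riesz_energy k F c"
    and M: "M \<ge> 0" and bound: "\<bar>comb_apply c F\<bar> \<le> M * kernel_norm k c"
  shows "kernel_norm k c \<le> M + sqrt (riesz_energy k F c - m)"
proof -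
  let ?N = "kernel_norm k c" and ?\<delta> = "sqrt (riesz_energy k F c - m)"
  have "?N^2 - comb_apply c F \<le> ?\<delta> * ?N"
    using riesz_energy_variation[OF pd min, of c c] by (simp add: kernel_norm_square[OF pd])
  then have "?N * ?N \<le> (M + ?\<delta>) * ?N"
    using bound by (simp add: power2_eq_square algebra_simps)
  moreover have "0 \<le> M + ?\<delta>" using M min[of c] by simp
  ultimately show ?thesis
    using kernel_norm_nonneg[OF pd, of c] by (cases "?N = 0") (auto simp: mult_le_cancel_right)
qed

lemma rkhs_approx_of_minimizing_sequence:
  assumes \<sigma>: "\<sigma> > 0" and min: "\<And>c. m \<le> riesz_energy (gauss_kernel \<sigma>) F c"
    and \<delta>: "(\<lambda>n. riesz_energy (gauss_kernel \<sigma>) F (g n) - m) \<longlonglongrightarrow> 0"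
  shows "rkhs_approx \<sigma> F g"
proof -
  let ?\<delta> = "\<lambda>n. riesz_energy (gauss_kernel \<sigma>) F (g n) - m"
  have pd: "pd_kernel (gauss_kernel \<sigma>)" by (rule pd_gauss_kernel[OF \<sigma>])
  have Cauchy: "\<exists>N. \<forall>i\<ge>N. \<forall>j\<ge>N. sqrt (kcomb_sqnorm \<sigma> (kcomb_diff (g i) (g j))) < \<epsilon>" if "\<epsilon> > 0" for \<epsilon>
  proof -
    obtain N where N: "\<And>n. n \<ge> N \<Longrightarrow> ?\<delta> n < \<epsilon>^2 / 4"
      using order_tendstoD(2)[OF \<delta>, of "\<epsilon>^2 / 4"] \<open>\<epsilon> > 0\<close> by (auto simp: eventually_sequentially)
    have "sqrt (kcomb_sqnorm \<sigma> (kcomb_diff (g i) (g j))) < \<epsilon>" if "i \<ge> N" "j \<ge> N" for i j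
    proof -
      have "kcomb_sqnorm \<sigma> (kcomb_diff (g i) (g j)) < \<epsilon>^2"
        using riesz_energy_parallelogram[OF pd min, of "g i" "g j"] N[OF \<open>i \<ge> N\<close>] N[OF \<open>j \<ge> N\<close>]
        by (simp add: kcomb_sqnorm_eq_kernel_inner)
      then have "sqrt (kcomb_sqnorm \<sigma> (kcomb_diff (g i) (g j))) < sqrt (\<epsilon>^2)"
        by (rule real_sqrt_less_mono)
      then show ?thesis using \<open>\<epsilon> > 0\<close> by simp
    qed
    then show ?thesis by blast
  qed
  have pointwise: "(\<lambda>n. kcomb_eval \<sigma> (g n) x) \<longlonglongrightarrow> F x" for x
  proof -
    have close: "\<bar>kcomb_eval \<sigma> (g n) x - F x\<bar> \<le> sqrt (?\<delta> n)" for n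
      using riesz_energy_variation[OF pd min, of "g n" "[(x, 1)]"]
      by (simp add: kcomb_eval_eq_kernel_inner kernel_norm_def kernel_inner_def gauss_kernel_def)
    have "(\<lambda>n. sqrt (?\<delta> n)) \<longlonglongrightarrow> 0"
      using tendsto_real_sqrt[OF \<delta>] by simp
    then have "(\<lambda>n. kcomb_eval \<sigma> (g n) x - F x) \<longlonglongrightarrow> 0"
      by (rule Lim_null_comparison[rotated]) (intro always_eventually allI, use close in simp)
    then show ?thesis by (rule LIM_zero_cancel)
  qed
  show ?thesis
    unfolding rkhs_approx_def using Cauchy pointwise by blast
qed

lemma gauss_rkhs_bounded_functional:
  assumes \<sigma>: "\<sigma> > 0" and M: "M \<ge> 0"
    and bound: "\<And>c. \<bar>comb_apply c F\<bar> \<le> M * kernel_norm (gauss_kernel \<sigma>) c"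
  shows "F \<in> gauss_rkhs \<sigma> \<and> gauss_rkhs_norm \<sigma> F \<le> M"
proof -
  let ?K = "gauss_kernel \<sigma>"
  have pd: "pd_kernel ?K" by (rule pd_gauss_kernel[OF \<sigma>])
  define m where "m = Inf (range (riesz_energy ?K F))"
  have bdd: "bdd_below (range (riesz_energy ?K F))"
    using riesz_energy_lower_bound[OF pd bound] by (intro bdd_belowI[of _ "- (M^2)"]) auto
  then have min: "m \<le> riesz_energy ?K F c" for c
    unfolding m_def by (rule cInf_lower[OF rangeI])
  obtain g where "(\<lambda>n. riesz_energy ?K F (g n)) \<longlonglongrightarrow> m"
    using minimizing_sequence[OF bdd] unfolding m_def by blast
  then have \<delta>: "(\<lambda>n. riesz_energy ?K F (g n) - m) \<longlonglongrightarrow> 0"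
    by (rule LIM_zero)
  have approx: "rkhs_approx \<sigma> F g"
    by (rule rkhs_approx_of_minimizing_sequence[OF \<sigma> min \<delta>])
  obtain L where L: "(\<lambda>n. kernel_norm ?K (g n)) \<longlonglongrightarrow> L"
    using convergent_kernel_norm_rkhs_approx[OF \<sigma> approx] by (auto simp: convergent_def)
  have "L \<le> M"
  proof (rule LIMSEQ_le[OF L])
    show "(\<lambda>n. M + sqrt (riesz_energy ?K F (g n) - m)) \<longlonglongrightarrow> M"
      using tendsto_add[OF tendsto_const tendsto_real_sqrt[OF \<delta>]] by simp
    show "\<exists>N. \<forall>n\<ge>N. kernel_norm ?K (g n) \<le> M + sqrt (riesz_energy ?K F (g n) - m)"
      using kernel_norm_le_riesz_energy[OF pd min M bound] by blast
  qed
  then show ?thesis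
    using approx gauss_rkhs_norm_le[OF \<sigma> approx L] by (auto simp: gauss_rkhs_def)
qed

lemma gauss_rkhs_of_approx_bound:
  assumes \<sigma>: "\<sigma> > 0" and e: "e > 0" and f: "f \<in> gauss_rkhs \<sigma>"
    and bound: "\<And>g L d. rkhs_approx \<sigma> f g \<Longrightarrow> (\<lambda>n. kernel_norm (gauss_kernel \<sigma>) (g n)) \<longlonglongrightarrow> L \<Longrightarrow>
      \<bar>comb_apply d F\<bar> \<le> e * L * kernel_norm (gauss_kernel \<sigma>) d"
  shows "F \<in> gauss_rkhs \<sigma> \<and> gauss_rkhs_norm \<sigma> F \<le> e * gauss_rkhs_norm \<sigma> f"
proof -
  define S where "S = {L. \<exists>g. rkhs_approx \<sigma> f g \<and> (\<lambda>n. kernel_norm (gauss_kernel \<sigma>) (g n)) \<longlonglongrightarrow> L}"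
  have each: "F \<in> gauss_rkhs \<sigma> \<and> gauss_rkhs_norm \<sigma> F \<le> e * L" if "L \<in> S" for L
  proof -
    obtain g where g: "rkhs_approx \<sigma> f g" "(\<lambda>n. kernel_norm (gauss_kernel \<sigma>) (g n)) \<longlonglongrightarrow> L"
      using \<open>L \<in> S\<close> by (auto simp: S_def)
    have "L \<ge> 0"
      using g(2) kernel_norm_nonneg[OF pd_gauss_kernel[OF \<sigma>]] by (blast intro: LIMSEQ_le_const)
    then show ?thesis
      using e bound[OF g] by (intro gauss_rkhs_bounded_functional[OF \<sigma>]) (simp_all add: mult.assoc)
  qed
  obtain g where "rkhs_approx \<sigma> f g"
    using f by (auto simp: gauss_rkhs_def)
  then obtain L where "L \<in> S"
    using convergent_kernel_norm_rkhs_approx[OF \<sigma> \<open>rkhs_approx \<sigma> f g\<close>]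
    by (auto simp: S_def convergent_def)
  have "gauss_rkhs_norm \<sigma> F / e \<le> Inf S"
  proof (rule cInf_greatest)
    show "S \<noteq> {}" using \<open>L \<in> S\<close> by blast
    show "gauss_rkhs_norm \<sigma> F / e \<le> L'" if "L' \<in> S" for L'
      using each[OF that] e by (simp add: divide_le_eq mult.commute)
  qed
  then show ?thesis
    using each[OF \<open>L \<in> S\<close>] e by (simp add: gauss_rkhs_norm_def sqrt_kcomb_sqnorm S_def divide_le_eq mult.commute)
qed

section \<open>The Ornstein--Uhlenbeck Koopman operator\<close>

lemma ou_c_pos: "\<alpha> > 0 \<Longrightarrow> t > 0 \<Longrightarrow> ou_c \<alpha> t > 0"
  by (simp add: ou_c_def)

lemma ou_density_eq_gaussian:
  "ou_density \<alpha> t x y = sqrt (ou_c \<alpha> t / pi) * gaussian (1 / ou_c \<alpha> t) (y - exp (- \<alpha> * t) * x)"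
  by (simp add: ou_density_def gaussian_def)

lemma integrable_ou_density:
  assumes "\<alpha> > 0" "t > 0"
  shows "integrable lborel (ou_density \<alpha> t x)"
proof -
  have "1 / ou_c \<alpha> t > 0" using ou_c_pos[OF assms] by simp
  from has_bochner_integral_gaussian[OF this, of "exp (- \<alpha> * t) * x"]
  have "integrable lborel (\<lambda>y. sqrt (ou_c \<alpha> t / pi) * gaussian (1 / ou_c \<alpha> t) (y - exp (- \<alpha> * t) * x))"
    by (intro integrable_mult_right integrable.intros)
  then show ?thesis
    by (simp add: ou_density_eq_gaussian[abs_def])
qed

lemma has_bochner_integral_koopman_kcomb:
  assumes \<alpha>: "\<alpha> > 0" and t: "t > 0" and \<sigma>: "\<sigma> > 0"
  shows "has_bochner_integral lborel (\<lambda>y. kcomb_eval \<sigma> g y * ou_density \<alpha> t x y)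
    (\<sigma> / sqrt (\<sigma>^2 + 1 / ou_c \<alpha> t) *
      comb_apply g (\<lambda>p. gaussian (\<sigma>^2 + 1 / ou_c \<alpha> t) (p - exp (- \<alpha> * t) * x)))"
proof -
  define c where "c = ou_c \<alpha> t"
  define a where "a = exp (- \<alpha> * t)"
  have c: "c > 0" unfolding c_def by (rule ou_c_pos[OF \<alpha> t])
  have "\<sigma>^2 > 0" "1 / c > 0" using \<sigma> c by simp_all
  then have "has_bochner_integral lborel
      (\<lambda>y. comb_apply g (\<lambda>p. sqrt (c / pi) * (gaussian (\<sigma>^2) (y - p) * gaussian (1 / c) (y - a * x))))
      (comb_apply g (\<lambda>p. sqrt (c / pi) *
        (sqrt (pi * \<sigma>^2 * (1 / c) / (\<sigma>^2 + 1 / c)) * gaussian (\<sigma>^2 + 1 / c) (p - a * x))))"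
    by (intro has_bochner_integral_comb_apply has_bochner_integral_mult_right has_bochner_integral_gaussian_mult)
  moreover have "kcomb_eval \<sigma> g y * ou_density \<alpha> t x y =
      comb_apply g (\<lambda>p. sqrt (c / pi) * (gaussian (\<sigma>^2) (y - p) * gaussian (1 / c) (y - a * x)))" for y
  proof -
    have "kcomb_eval \<sigma> g y * ou_density \<alpha> t x y =
        sqrt (c / pi) * (comb_apply g (\<lambda>p. gaussian (\<sigma>^2) (y - p)) * gaussian (1 / c) (y - a * x))"
      by (simp add: kcomb_eval_eq_comb_apply ou_density_eq_gaussian c_def a_def)
    then show ?thesis
      by (simp only: comb_apply_mult_const comb_apply_cmult)
  qed
  moreover have "sqrt (c / pi) * sqrt (pi * \<sigma>^2 * (1 / c) / (\<sigma>^2 + 1 / c)) = \<sigma> / sqrt (\<sigma>^2 + 1 / c)"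
  proof -
    have "sqrt (c / pi) * sqrt (pi * \<sigma>^2 * (1 / c) / (\<sigma>^2 + 1 / c)) =
        sqrt (c / pi * (pi * \<sigma>^2 * (1 / c) / (\<sigma>^2 + 1 / c)))"
      by (rule real_sqrt_mult[symmetric])
    also have "c / pi * (pi * \<sigma>^2 * (1 / c) / (\<sigma>^2 + 1 / c)) = \<sigma>^2 / (\<sigma>^2 + 1 / c)"
      using c by (simp add: field_simps)
    also have "sqrt (\<sigma>^2 / (\<sigma>^2 + 1 / c)) = \<sigma> / sqrt (\<sigma>^2 + 1 / c)"
      using \<sigma> by (simp add: real_sqrt_divide)
    finally show ?thesis .
  qed
  ultimately show ?thesis
    unfolding c_def[symmetric] a_def[symmetric]
    by (simp only: mult.assoc[symmetric] comb_apply_cmult)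
qed

lemma tendsto_koopman_rkhs_approx:
  assumes \<alpha>: "\<alpha> > 0" and t: "t > 0" and \<sigma>: "\<sigma> > 0" and approx: "rkhs_approx \<sigma> f g"
  shows "(\<lambda>n. integral\<^sup>L lborel (\<lambda>y. kcomb_eval \<sigma> (g n) y * ou_density \<alpha> t x y)) \<longlonglongrightarrow> koopman \<alpha> t f x"
proof -
  have pointwise: "(\<lambda>n. kcomb_eval \<sigma> (g n) y) \<longlonglongrightarrow> f y" for y
    using approx by (simp add: rkhs_approx_def)
  obtain B where B: "\<And>n. kernel_norm (gauss_kernel \<sigma>) (g n) \<le> B"
    using convergent_imp_Bseq[OF convergent_kernel_norm_rkhs_approx[OF \<sigma> approx]]
    by (auto simp: Bseq_def) (meson abs_le_D1)
  have density: "integrable lborel (ou_density \<alpha> t x)" "ou_density \<alpha> t x \<in> borel_measurable lborel"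
    using integrable_ou_density[OF \<alpha> t] by auto
  have "f \<in> borel_measurable lborel"
    by (rule borel_measurable_LIMSEQ_real[OF pointwise]) (simp add: borel_measurable_kcomb_eval)
  then have "(\<lambda>n. integral\<^sup>L lborel (\<lambda>y. kcomb_eval \<sigma> (g n) y * ou_density \<alpha> t x y))
      \<longlonglongrightarrow> integral\<^sup>L lborel (\<lambda>y. f y * ou_density \<alpha> t x y)"
  proof (intro integral_dominated_convergence[where w = "\<lambda>y. B * ou_density \<alpha> t x y"])
    show "AE y in lborel. norm (kcomb_eval \<sigma> (g n) y * ou_density \<alpha> t x y) \<le> B * ou_density \<alpha> t x y" for n
    proof (rule AE_I2)
      fix y
      have "\<bar>kcomb_eval \<sigma> (g n) y\<bar> \<le> B" using abs_kcomb_eval_le[OF \<sigma>] B order_trans by blast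
      moreover have "ou_density \<alpha> t x y \<ge> 0" using ou_c_pos[OF \<alpha> t] by (simp add: ou_density_def)
      ultimately show "norm (kcomb_eval \<sigma> (g n) y * ou_density \<alpha> t x y) \<le> B * ou_density \<alpha> t x y"
        by (simp add: abs_mult mult_right_mono)
    qed
    show "AE y in lborel. (\<lambda>n. kcomb_eval \<sigma> (g n) y * ou_density \<alpha> t x y) \<longlonglongrightarrow> f y * ou_density \<alpha> t x y"
      using pointwise by (intro AE_I2 tendsto_mult_right)
  qed (use density borel_measurable_kcomb_eval in auto)
  then show ?thesis
    using t by (simp add: koopman_def)
qed

lemma koopman_gauss_rkhs_pos:
  assumes \<alpha>: "\<alpha> > 0" and \<sigma>: "\<sigma> > 0" and t: "t > 0" and f: "f \<in> gauss_rkhs \<sigma>"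
  shows "koopman \<alpha> t f \<in> gauss_rkhs \<sigma> \<and>
    gauss_rkhs_norm \<sigma> (koopman \<alpha> t f) \<le> exp (\<alpha> / 2 * t) * gauss_rkhs_norm \<sigma> f"
proof (rule gauss_rkhs_of_approx_bound[OF \<sigma> exp_gt_zero f])
  fix g L d
  assume g: "rkhs_approx \<sigma> f g" and L: "(\<lambda>n. kernel_norm (gauss_kernel \<sigma>) (g n)) \<longlonglongrightarrow> L"
  define s where "s = \<sigma>^2 + 1 / ou_c \<alpha> t"
  define a where "a = exp (- \<alpha> * t)"
  have a: "0 < a" "a \<le> 1" using \<alpha> t by (simp_all add: a_def)
  have s: "\<sigma>^2 \<le> s" using ou_c_pos[OF \<alpha> t] by (simp add: s_def)
  have "exp (\<alpha> / 2 * t)^2 = 1 / a"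
    by (simp add: a_def exp_minus exp_double[symmetric] field_simps)
  then have e: "1 / sqrt a = exp (\<alpha> / 2 * t)"
    by (metis real_sqrt_divide real_sqrt_one real_sqrt_unique exp_ge_zero)
  have lim: "(\<lambda>n. comb_apply d (\<lambda>x. \<sigma> / sqrt s * comb_apply (g n) (\<lambda>p. gaussian s (p - a * x))))
      \<longlonglongrightarrow> comb_apply d (koopman \<alpha> t f)"
    using tendsto_comb_apply[OF tendsto_koopman_rkhs_approx[OF \<alpha> t \<sigma> g]]
      has_bochner_integral_integral_eq[OF has_bochner_integral_koopman_kcomb[OF \<alpha> t \<sigma>]]
    by (simp add: s_def a_def)
  have bound: "\<bar>comb_apply d (\<lambda>x. \<sigma> / sqrt s * comb_apply (g n) (\<lambda>p. gaussian s (p - a * x)))\<bar> \<le>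
      exp (\<alpha> / 2 * t) * kernel_norm (gauss_kernel \<sigma>) (g n) * kernel_norm (gauss_kernel \<sigma>) d" for n
    using abs_gauss_dilation_le[OF \<sigma> a s, of d "g n"] unfolding e[symmetric] by simp
  have "(\<lambda>n. exp (\<alpha> / 2 * t) * kernel_norm (gauss_kernel \<sigma>) (g n) * kernel_norm (gauss_kernel \<sigma>) d)
      \<longlonglongrightarrow> exp (\<alpha> / 2 * t) * L * kernel_norm (gauss_kernel \<sigma>) d"
    by (intro tendsto_mult tendsto_const L)
  with tendsto_rabs[OF lim] bound
  show "\<bar>comb_apply d (koopman \<alpha> t f)\<bar> \<le> exp (\<alpha> / 2 * t) * L * kernel_norm (gauss_kernel \<sigma>) d"
    by (intro LIMSEQ_le) auto
qed

theorem propositionE2: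
  fixes \<alpha> \<sigma> t :: real
  assumes "\<alpha> > 0" and "\<sigma> > 0" and "t \<ge> 0"
  shows "\<forall>f\<in>gauss_rkhs \<sigma>. koopman \<alpha> t f \<in> gauss_rkhs \<sigma> \<and>
           gauss_rkhs_norm \<sigma> (koopman \<alpha> t f) \<le> exp (\<alpha> / 2 * t) * gauss_rkhs_norm \<sigma> f"
proof (cases "t = 0")
  case True
  then show ?thesis by (simp add: koopman_def)
next
  case False
  then show ?thesis
    using koopman_gauss_rkhs_pos[OF assms(1,2)] assms(3) by simp
qed

end
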